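(* Let $n\ge3$ and $x^\Lambda\partial_k\in\mathcal{B}$. If $\mathrm{lev}_i(x^\Lambda\partial_k)\le i$ for some integer $i\ge-1$, then $\mathrm{lev}_{i+(n-1)}(x^\Lambda\partial_k)\le i+(n-1)$. In particular, for every integer $h$: $\mathrm{lev}_i(x^\Lambda\partial_k)>i$ for all integers $i$ with $-1\le i\le h(n-1)$ if and only if $\mathrm{lev}_i(x^\Lambda\partial_k)>i$ for all integers $i\ge -1$ with $(h-1)(n-1)+1\le i\le h(n-1)$.
   Context: Fix an integer $n\ge 3$. A partition is a sequence $\Lambda=(\lambda_j)_{j\ge1}$ of non-negative integers with finite support; $\mathrm{wt}(\Lambda)=\sum_j j\lambda_j$; $\mathrm{Part}(k)$ is the set of partitions with $\lambda_j=0$ for $j>k$. Write $x^\Lambda=\prod_j x_j^{\lambda_j}$, $\deg(x^\Lambda)=\sum_j\lambda_j$. $\mathcal{B}=\{x^\Lambda\partial_k : 1\le k\le n,\ \Lambda\in\mathrm{Part}(k-1)\}$. For an integer $i\ge-1$, let $r_i\in\{1,\dots,n-1\}$ with $i\equiv r_i\pmod{n-1}$ and $h_i=\lfloor (i-1)/(n-1)\rfloor+1$. Define $\mathrm{WD}(x^\Lambda\partial_k)=\mathrm{wt}(\Lambda)-\deg(x^\Lambda)+n-k$ and $\mathrm{lev}_i(x^\Lambda\partial_k)=h_i\,\mathrm{WD}(x^\Lambda\partial_k)+\deg(x^\Lambda)-1$ (defined for integers $i\ge-1$). *)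

theory Defs
  imports Main
begin

text \<open>A partition is a function Lambda :: nat => nat (Lambda j = lambda_j, j >= 1),
  with Lambda 0 = 0 and finite support.  Part k: lambda_j = 0 for j > k.\<close>

definition Part :: "nat \<Rightarrow> (nat \<Rightarrow> nat) set" where
  "Part k = {L. \<forall>j. (j = 0 \<or> k < j) \<longrightarrow> L j = 0}"

definition wt :: "(nat \<Rightarrow> nat) \<Rightarrow> nat" where
  "wt L = (\<Sum>j\<in>{j. L j \<noteq> 0}. j * L j)"

definition deg :: "(nat \<Rightarrow> nat) \<Rightarrow> nat" where
  "deg L = (\<Sum>j\<in>{j. L j \<noteq> 0}. L j)"

text \<open>The basis B: pairs (Lambda, k) standing for x^Lambda d_k.\<close>
definition basisB :: "nat \<Rightarrow> ((nat \<Rightarrow> nat) \<times> nat) set" where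
  "basisB n = {(L, k). 1 \<le> k \<and> k \<le> n \<and> L \<in> Part (k - 1)}"

definition hh :: "nat \<Rightarrow> int \<Rightarrow> int" where
  "hh n i = (i - 1) div (int n - 1) + 1"

definition WD :: "nat \<Rightarrow> (nat \<Rightarrow> nat) \<Rightarrow> nat \<Rightarrow> int" where
  "WD n L k = int (wt L) - int (deg L) + int n - int k"

definition lev :: "nat \<Rightarrow> int \<Rightarrow> (nat \<Rightarrow> nat) \<Rightarrow> nat \<Rightarrow> int" where
  "lev n i L k = hh n i * WD n L k + int (deg L) - 1"

end

theory Submission
  imports Defs
begin

text \<open>
  Since \<open>hh n\<close> grows by one when \<open>i\<close> grows by \<open>n - 1\<close>, shifting \<open>i\<close> by one
  period adds \<open>WD\<close> to the level, so the first claim amounts to \<open>WD \<le> n - 1\<close> whenever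
  \<open>lev i \<le> i\<close>. For \<open>deg \<le> 1\<close> this holds outright. For \<open>deg \<ge> 2\<close>, \<open>lev i \<le> i\<close> forces
  \<open>hh n i \<ge> 1\<close>, and \<open>i \<le> hh n i * (n - 1)\<close> gives \<open>hh n i * (WD - (n - 1)) \<le> 1 - deg < 0\<close>.
  Iterating, a failure \<open>lev i \<le> i\<close> propagates along \<open>i + t (n - 1)\<close>, and one of these
  indices lands in the last window \<open>((h - 1)(n - 1), h (n - 1)]\<close>.
\<close>

lemma hh_add_period:
  assumes "n \<ge> 2"
  shows "hh n (i + (int n - 1)) = hh n i + 1"
proof -
  have "(i + (int n - 1) - 1) div (int n - 1) = (i - 1 + (int n - 1)) div (int n - 1)"
    by (simp add: algebra_simps)
  also have "\<dots> = (i - 1) div (int n - 1) + 1"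
    using assms by (intro div_add_self2) simp
  finally show ?thesis
    unfolding hh_def by simp
qed

lemma hh_nonneg:
  assumes "n \<ge> 3" and "-1 \<le> i"
  shows "0 \<le> hh n i"
proof -
  have "hh n i = (i - 1 + (int n - 1)) div (int n - 1)"
    using assms(1) unfolding hh_def by (subst div_add_self2) simp_all
  then show ?thesis
    using assms by (simp add: pos_imp_zdiv_nonneg_iff)
qed

lemma hh_pos:
  assumes "n \<ge> 2" and "0 < i"
  shows "0 < hh n i"
  using assms unfolding hh_def by (simp add: pos_imp_zdiv_nonneg_iff)

lemma le_hh_mult:
  assumes "n \<ge> 2"
  shows "i \<le> hh n i * (int n - 1)"
proof -
  let ?m = "int n - 1"
  have "i - 1 = (i - 1) div ?m * ?m + (i - 1) mod ?m"
    by (rule div_mult_mod_eq[symmetric])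
  moreover have "(i - 1) mod ?m < ?m"
    using assms by simp
  ultimately show ?thesis
    unfolding hh_def by (simp add: algebra_simps)
qed

lemma Part_support:
  assumes "L \<in> Part p" and "L j \<noteq> 0"
  shows "1 \<le> j" and "j \<le> p"
proof -
  have "L 0 = 0" and "\<And>j. p < j \<Longrightarrow> L j = 0"
    using assms(1) unfolding Part_def by auto
  then show "1 \<le> j" and "j \<le> p"
    using assms(2) by (metis less_one not_le)+
qed

lemma deg_le_wt:
  assumes "L \<in> Part p"
  shows "deg L \<le> wt L"
  unfolding deg_def wt_def
  by (rule sum_mono) (use Part_support(1)[OF assms] in simp)

lemma wt_le_mult_deg:
  assumes "L \<in> Part p"
  shows "wt L \<le> p * deg L"
proof -
  have "wt L \<le> (\<Sum>j\<in>{j. L j \<noteq> 0}. p * L j)"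
    unfolding wt_def by (rule sum_mono) (use Part_support(2)[OF assms] in simp)
  then show ?thesis
    unfolding deg_def by (simp add: sum_distrib_left)
qed

lemma WD_nonneg:
  assumes "(L, k) \<in> basisB n"
  shows "0 \<le> WD n L k"
  using assms deg_le_wt[of L "k - 1"] unfolding basisB_def WD_def by auto

lemma lev_add_period:
  assumes "n \<ge> 2"
  shows "lev n (i + (int n - 1)) L k = lev n i L k + WD n L k"
  unfolding lev_def hh_add_period[OF assms] by (simp add: algebra_simps)

lemma WD_le_if_deg_le_1:
  assumes "(L, k) \<in> basisB n" and "deg L \<le> 1"
  shows "WD n L k \<le> int n - 1"
proof -
  have k: "1 \<le> k" "k \<le> n" and L: "L \<in> Part (k - 1)"
    using assms(1) unfolding basisB_def by auto
  have "wt L \<le> k - 1"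
    using wt_le_mult_deg[OF L] assms(2) by (cases "deg L") auto
  then show ?thesis
    using k assms(2) unfolding WD_def by linarith
qed

lemma WD_le_if_lev_le:
  assumes n: "n \<ge> 3" and B: "(L, k) \<in> basisB n"
    and i: "-1 \<le> i" and lev: "lev n i L k \<le> i"
  shows "WD n L k \<le> int n - 1"
proof (cases "deg L \<le> 1")
  case True
  then show ?thesis
    using WD_le_if_deg_le_1[OF B] by blast
next
  case False
  have "0 < i"
  proof (rule ccontr)
    assume "\<not> 0 < i"
    moreover have "0 \<le> hh n i * WD n L k"
      using hh_nonneg[OF n i] WD_nonneg[OF B] by simp
    ultimately show False
      using lev False unfolding lev_def by simp
  qed
  then have h: "0 < hh n i"
    using hh_pos n by simp
  have "hh n i * WD n L k + int (deg L) - 1 \<le> hh n i * (int n - 1)"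
    using lev le_hh_mult[of n i] n unfolding lev_def by simp
  then have "hh n i * (WD n L k - (int n - 1)) < 0"
    using False by (simp add: algebra_simps)
  then show ?thesis
    using h by (simp add: mult_less_0_iff)
qed

lemma lev_le_add_period:
  assumes "n \<ge> 3" and "(L, k) \<in> basisB n" and "-1 \<le> i" and "lev n i L k \<le> i"
  shows "lev n (i + (int n - 1)) L k \<le> i + (int n - 1)"
  using assms lev_add_period[of n i L k] WD_le_if_lev_le[OF assms] by simp

lemma lev_le_add_periods:
  assumes "n \<ge> 3" and "(L, k) \<in> basisB n" and "-1 \<le> i" and "lev n i L k \<le> i"
  shows "lev n (i + int t * (int n - 1)) L k \<le> i + int t * (int n - 1)"
proof (induction t)
  case 0
  then show ?case
    using assms(4) by simp
next
  case (Suc t)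
  have "0 \<le> int t * (int n - 1)"
    using assms(1) by simp
  then have "-1 \<le> i + int t * (int n - 1)"
    using assms(3) by linarith
  from lev_le_add_period[OF assms(1,2) this Suc.IH] show ?case
    by (simp add: algebra_simps)
qed

lemma shift_into_window:
  fixes i a m :: int
  assumes "0 < m" and "i \<le> a"
  obtains t :: nat where "a - m < i + int t * m" and "i + int t * m \<le> a"
proof
  let ?t = "nat ((a - i) div m)"
  have "int ?t * m = (a - i) div m * m"
    using assms by (simp add: pos_imp_zdiv_nonneg_iff)
  moreover have "a - i = (a - i) div m * m + (a - i) mod m"
    by simp
  moreover have "0 \<le> (a - i) mod m" and "(a - i) mod m < m"
    using assms(1) by simp_all
  ultimately show "a - m < i + int ?t * m" and "i + int ?t * m \<le> a"
    by linarith+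
qed

theorem lemma2p6:
  fixes n :: nat and L :: "nat \<Rightarrow> nat" and k :: nat
  assumes "n \<ge> 3" and "(L, k) \<in> basisB n"
  shows "(\<forall>i::int. i \<ge> -1 \<longrightarrow> lev n i L k \<le> i \<longrightarrow>
            lev n (i + (int n - 1)) L k \<le> i + (int n - 1))
     \<and> (\<forall>h::int.
          (\<forall>i::int. -1 \<le> i \<and> i \<le> h * (int n - 1) \<longrightarrow> lev n i L k > i)
          \<longleftrightarrow>
          (\<forall>i::int. -1 \<le> i \<and> (h - 1) * (int n - 1) + 1 \<le> i \<and> i \<le> h * (int n - 1)
               \<longrightarrow> lev n i L k > i))"
proof (intro conjI allI impI iffI)
  fix i :: int
  assume "i \<ge> -1" and "lev n i L k \<le> i"
  then show "lev n (i + (int n - 1)) L k \<le> i + (int n - 1)"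
    using lev_le_add_period assms by blast
next
  fix h i :: int
  assume "\<forall>i. -1 \<le> i \<and> i \<le> h * (int n - 1) \<longrightarrow> i < lev n i L k"
    and "-1 \<le> i \<and> (h - 1) * (int n - 1) + 1 \<le> i \<and> i \<le> h * (int n - 1)"
  then show "i < lev n i L k" by auto
next
  fix h i :: int
  assume window: "\<forall>i. -1 \<le> i \<and> (h - 1) * (int n - 1) + 1 \<le> i \<and> i \<le> h * (int n - 1)
               \<longrightarrow> i < lev n i L k"
    and i: "-1 \<le> i \<and> i \<le> h * (int n - 1)"
  show "i < lev n i L k"
  proof (rule ccontr)
    assume "\<not> i < lev n i L k"
    then have fail: "lev n i L k \<le> i" by simp
    obtain t :: nat where
      "h * (int n - 1) - (int n - 1) < i + int t * (int n - 1)"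
      "i + int t * (int n - 1) \<le> h * (int n - 1)"
      using shift_into_window[of "int n - 1" i "h * (int n - 1)"] assms(1) i by auto
    moreover have "0 \<le> int t * (int n - 1)"
      using assms(1) by simp
    moreover have "lev n (i + int t * (int n - 1)) L k \<le> i + int t * (int n - 1)"
      using lev_le_add_periods[OF assms] i fail by blast
    ultimately show False
      using window[rule_format, of "i + int t * (int n - 1)"] i
      by (simp add: algebra_simps)
  qed
qed

end
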